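(* Let $\mathcal S = \mathrm{span}\{g_1,\dots,g_{N-k}\}$, with $0\le k\le N$ and $g_1,\dots,g_{N-k}$ independent, be a toy stabilizer group on $N$ elementary systems. Then the epistemic state of $\mathcal S$ can be written as the mixture of $2^k$ pure states; that is, there exist $2^k$ toy stabilizer groups, each with $N$ independent generators, such that the state of $\mathcal S$ is obtained from them by iterated pairwise mixtures.
   Context: Toy Pauli matrices: $\mathcal{X} = \mathrm{diag}(1,-1,1,-1)$, $\mathcal{Y} = \mathrm{diag}(1,-1,-1,1)$, $\mathcal{Z} = \mathrm{diag}(1,1,-1,-1)$; the toy Pauli group is $G_N = \{\alpha\, p_1\otimes\cdots\otimes p_N : p_i \in \{\mathbb{1}_4,\mathcal X,\mathcal Y,\mathcal Z\}, \alpha\in\{\pm1\}\}$. Let $m: G_N\to P_N$ be the homomorphism into the $N$-qubit Pauli group with $m(\mathcal X_k)=X_k$, $m(\mathcal Z_k)=Z_k$, $m(-\mathbb 1)=-\mathbb 1$; $g,h\in G_N$ "commute" if $m(g),m(h)$ commute. A toy stabilizer group is a subgroup of $G_N$ whose elements pairwise "commute" and which does not contain $-\mathbb 1$; its epistemic state is the set of ontic states $e_{i_1}\otimes\cdots\otimes e_{i_N}$ ($e_i$ the standard basis of $\mathbb R^4$) fixed by every element of the group. A stabilizer group is pure (maximal information) if it has $N$ independent generators, and mixed otherwise. A stabilizer group $\mathcal S'$ is a rephasing of $\mathcal S$ if for every $g\in\mathcal S$, $g\in\mathcal S'$ or $-g\in \mathcal S'$. For two stabilizer groups $\mathcal S,\mathcal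 S'$ that are rephasings of each other, their mixture is the state with stabilizer group $\mathcal S\cap\mathcal S'$. *)

theory Defs
  imports Main
begin

datatype pauli = PI | PX | PY | PZ

text \<open>Diagonal entries of the toy Pauli matrices (indices 0..3):
  X = diag(1,-1,1,-1), Y = diag(1,-1,-1,1), Z = diag(1,1,-1,-1).\<close>
fun pval :: "pauli \<Rightarrow> nat \<Rightarrow> int" where
  "pval PI i = 1"
| "pval PX i = (if i = 0 \<or> i = 2 then 1 else -1)"
| "pval PY i = (if i = 0 \<or> i = 3 then 1 else -1)"
| "pval PZ i = (if i = 0 \<or> i = 1 then 1 else -1)"

text \<open>Products of single-site toy Pauli matrices (all diagonal, no phases).\<close>
fun pmul :: "pauli \<Rightarrow> pauli \<Rightarrow> pauli" where
  "pmul PI q = q"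
| "pmul p PI = p"
| "pmul PX PX = PI" | "pmul PY PY = PI" | "pmul PZ PZ = PI"
| "pmul PX PY = PZ" | "pmul PY PX = PZ"
| "pmul PX PZ = PY" | "pmul PZ PX = PY"
| "pmul PY PZ = PX" | "pmul PZ PY = PX"

text \<open>An element alpha p_1 (x) ... (x) p_N, encoded as (neg, [p_1,...,p_N]) with
  alpha = -1 iff neg.\<close>
type_synonym toy = "bool \<times> pauli list"

definition toyG :: "nat \<Rightarrow> toy set" where
  "toyG N = {g. length (snd g) = N}"

definition tone :: "nat \<Rightarrow> toy" where
  "tone N = (False, replicate N PI)"

definition tminus_one :: "nat \<Rightarrow> toy" where
  "tminus_one N = (True, replicate N PI)"

definition tmul :: "toy \<Rightarrow> toy \<Rightarrow> toy" where
  "tmul g h = (fst g \<noteq> fst h, map2 pmul (snd g) (snd h))"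

definition tneg :: "toy \<Rightarrow> toy" where
  "tneg g = (\<not> fst g, snd g)"

text \<open>Diagonal entry of a toy Pauli element at ontic state e_{i_1} (x) ... (x) e_{i_N}.\<close>
definition tval :: "toy \<Rightarrow> nat list \<Rightarrow> int" where
  "tval g is = (if fst g then -1 else 1) *
      (\<Prod>k<length (snd g). pval (snd g ! k) (is ! k))"

text \<open>m(X)=X, m(Z)=Z, m(Y)=m(XZ)=XZ. Single-site images m(p), m(q) anticommute iff
  both are non-identity and different; tensor products commute iff the number of
  anticommuting sites is even.\<close>
definition panti :: "pauli \<Rightarrow> pauli \<Rightarrow> bool" where
  "panti p q \<longleftrightarrow> p \<noteq> PI \<and> q \<noteq> PI \<and> p \<noteq> q"

definition tcomm :: "toy \<Rightarrow> toy \<Rightarrow> bool" where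
  "tcomm g h \<longleftrightarrow> even (card {k. k < length (snd g) \<and> panti (snd g ! k) (snd h ! k)})"

text \<open>Every element is an involution, so a subset containing the identity and closed
  under products is a subgroup.\<close>
definition toy_subgroup :: "nat \<Rightarrow> toy set \<Rightarrow> bool" where
  "toy_subgroup N S \<longleftrightarrow> S \<subseteq> toyG N \<and> tone N \<in> S \<and> (\<forall>g\<in>S. \<forall>h\<in>S. tmul g h \<in> S)"

definition toy_stab :: "nat \<Rightarrow> toy set \<Rightarrow> bool" where
  "toy_stab N S \<longleftrightarrow> toy_subgroup N S \<and> (\<forall>g\<in>S. \<forall>h\<in>S. tcomm g h) \<and> tminus_one N \<notin> S"

inductive_set tspan :: "nat \<Rightarrow> toy set \<Rightarrow> toy set" for N :: nat and A :: "toy set" where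
  one: "tone N \<in> tspan N A"
| gen: "g \<in> A \<Longrightarrow> g \<in> tspan N A"
| mul: "g \<in> tspan N A \<Longrightarrow> h \<in> tspan N A \<Longrightarrow> tmul g h \<in> tspan N A"

definition tindep :: "nat \<Rightarrow> toy list \<Rightarrow> bool" where
  "tindep N gs \<longleftrightarrow> distinct gs \<and>
     (\<forall>i<length gs. gs ! i \<notin> tspan N (set gs - {gs ! i}))"

definition toy_pure :: "nat \<Rightarrow> toy set \<Rightarrow> bool" where
  "toy_pure N S \<longleftrightarrow> toy_stab N S \<and>
     (\<exists>gs. length gs = N \<and> set gs \<subseteq> toyG N \<and> tindep N gs \<and> S = tspan N (set gs))"

definition epistemic_state :: "nat \<Rightarrow> toy set \<Rightarrow> nat list set" where
  "epistemic_state N S = {is. length is = N \<and> (\<forall>k<N. is ! k < 4) \<and> (\<forall>g\<in>S. tval g is = 1)}"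

definition rephasing_of :: "toy set \<Rightarrow> toy set \<Rightarrow> bool" where
  "rephasing_of S' S \<longleftrightarrow> (\<forall>g\<in>S. g \<in> S' \<or> tneg g \<in> S')"

inductive mixes :: "nat \<Rightarrow> toy set list \<Rightarrow> toy set \<Rightarrow> bool" for N :: nat where
  leaf: "toy_stab N S \<Longrightarrow> mixes N [S] S"
| mix: "mixes N A S1 \<Longrightarrow> mixes N B S2 \<Longrightarrow> toy_stab N S1 \<Longrightarrow> toy_stab N S2 \<Longrightarrow>
        rephasing_of S1 S2 \<Longrightarrow> rephasing_of S2 S1 \<Longrightarrow> mixes N (A @ B) (S1 \<inter> S2)"

end

theory Submission
  imports Defs
begin

(* When S has fewer than N generators, a counting argument shows that the
   Pauli strings commuting with S are too many to all lie (with either phase) in S: there are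
   at least 4^N / 2^(N-k) of them, while S has at most 2^(N-k) elements. So some h commutes
   with S while neither h nor -h lies in S. Adjoining h, respectively -h, gives two stabilizer
   groups with one more independent generator; they are rephasings of each other and their
   intersection is S. By induction each of them is a mixture of 2^(k-1) pure states, and the two
   families are disjoint because no stabilizer group contains both h and -h. *)

lemma pmul_commute: "pmul p q = pmul q p"
  by (cases p; cases q) auto

lemma pmul_assoc: "pmul (pmul p q) r = pmul p (pmul q r)"
  by (cases p; cases q; cases r) auto

lemma pmul_left_commute: "pmul p (pmul q r) = pmul q (pmul p r)"
  by (cases p; cases q; cases r) auto

lemma pmul_self [simp]: "pmul p p = PI"
  by (cases p) auto

lemma panti_pmul_left: "panti (pmul p q) r \<longleftrightarrow> panti p r \<noteq> panti q r"
  by (cases p; cases q; cases r) (auto simp: panti_def)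

lemma panti_sym: "panti p q \<longleftrightarrow> panti q p"
  by (auto simp: panti_def)

lemma toyG_iff: "g \<in> toyG N \<longleftrightarrow> length (snd g) = N"
  by (simp add: toyG_def)

lemma tmul_assoc: "tmul (tmul a b) c = tmul a (tmul b c)"
  unfolding tmul_def by (auto intro!: nth_equalityI simp: pmul_assoc)

lemma tmul_commute: "tmul a b = tmul b a"
  unfolding tmul_def by (auto intro!: nth_equalityI simp: pmul_commute)

lemma tmul_left_commute: "tmul a (tmul b c) = tmul b (tmul a c)"
  unfolding tmul_def by (auto intro!: nth_equalityI simp: pmul_left_commute)

lemmas tmul_ac = tmul_assoc tmul_commute tmul_left_commute

lemma tmul_self: "g \<in> toyG N \<Longrightarrow> tmul g g = tone N"
  unfolding tmul_def tone_def toyG_iff by (auto intro!: nth_equalityI)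

lemma tmul_tone_left: "g \<in> toyG N \<Longrightarrow> tmul (tone N) g = g"
  unfolding tmul_def tone_def toyG_iff by (cases g) (auto intro!: nth_equalityI)

lemma tmul_tone_right: "g \<in> toyG N \<Longrightarrow> tmul g (tone N) = g"
  using tmul_tone_left tmul_commute by metis

lemma tmul_cancel_left: "g \<in> toyG N \<Longrightarrow> h \<in> toyG N \<Longrightarrow> tmul g (tmul g h) = h"
  by (metis tmul_assoc tmul_self tmul_tone_left)

lemma tneg_tneg [simp]: "tneg (tneg a) = a"
  by (simp add: tneg_def)

lemma tmul_tneg_left: "tmul (tneg a) b = tneg (tmul a b)"
  by (simp add: tmul_def tneg_def)

lemma tmul_tneg_right: "tmul a (tneg b) = tneg (tmul a b)"
  by (simp add: tmul_def tneg_def)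

lemma tneg_tone: "tneg (tone N) = tminus_one N"
  by (simp add: tneg_def tone_def tminus_one_def)

lemma tmul_tminus_one: "h \<in> toyG N \<Longrightarrow> tmul h (tminus_one N) = tneg h"
  by (simp flip: tneg_tone add: tmul_tneg_right tmul_tone_right)

lemma tneg_toyG: "a \<in> toyG N \<Longrightarrow> tneg a \<in> toyG N"
  by (simp add: tneg_def toyG_iff)

lemma tmul_toyG: "a \<in> toyG N \<Longrightarrow> b \<in> toyG N \<Longrightarrow> tmul a b \<in> toyG N"
  by (simp add: tmul_def toyG_iff)

lemma tone_toyG: "tone N \<in> toyG N"
  by (simp add: tone_def toyG_iff)

lemma toy_stab_tneg_notin:
  assumes stab: "toy_stab N S" and h: "h \<in> S"
  shows "tneg h \<notin> S"
proof
  assume "tneg h \<in> S"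
  with stab h have "tmul h (tneg h) \<in> S"
    unfolding toy_stab_def toy_subgroup_def by blast
  moreover have "tmul h (tneg h) = tminus_one N"
    using stab h unfolding toy_stab_def toy_subgroup_def
    by (auto simp: tmul_tneg_right tmul_self tneg_tone)
  ultimately show False
    using stab unfolding toy_stab_def by simp
qed

lemma tspan_subset_toyG:
  assumes "A \<subseteq> toyG N"
  shows "tspan N A \<subseteq> toyG N"
proof
  fix x assume "x \<in> tspan N A"
  then show "x \<in> toyG N"
    using assms by (induction rule: tspan.induct) (auto simp: tone_toyG tmul_toyG)
qed

lemma tspan_mono:
  assumes "A \<subseteq> B"
  shows "tspan N A \<subseteq> tspan N B"
proof
  fix x assume "x \<in> tspan N A"
  then show "x \<in> tspan N B"
    using assms by (induction rule: tspan.induct) (auto intro: tspan.intros)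
qed

lemma tspan_empty: "tspan N {} = {tone N}"
proof
  show "tspan N {} \<subseteq> {tone N}"
  proof
    fix x assume "x \<in> tspan N {}"
    then show "x \<in> {tone N}"
      by (induction rule: tspan.induct) (auto simp: tmul_self tone_toyG)
  qed
qed (auto intro: tspan.intros)

lemma tmul_image_iff:
  assumes S: "S \<subseteq> toyG N" and h: "h \<in> toyG N" and x: "x \<in> toyG N"
  shows "x \<in> tmul h ` S \<longleftrightarrow> tmul h x \<in> S"
proof
  assume "x \<in> tmul h ` S"
  then obtain s where s: "s \<in> S" "x = tmul h s"
    by blast
  with S have "s \<in> toyG N"
    by blast
  with s show "tmul h x \<in> S"
    by (simp add: tmul_cancel_left[OF h])
next
  assume "tmul h x \<in> S"
  moreover have "x = tmul h (tmul h x)"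
    by (simp add: tmul_cancel_left[OF h x])
  ultimately show "x \<in> tmul h ` S"
    by (rule rev_image_eqI)
qed

lemma tspan_insert_cases:
  assumes A: "A \<subseteq> toyG N" and h: "h \<in> toyG N" and z: "z \<in> tspan N (insert h A)"
  shows "z \<in> tspan N A \<or> tmul h z \<in> tspan N A"
  using z
proof (induction rule: tspan.induct)
  case one
  then show ?case by (rule disjI1) (rule tspan.one)
next
  case (gen g)
  then show ?case
    using tmul_self[OF h] by (auto intro: tspan.intros)
next
  case (mul x y)
  have "tspan N (insert h A) \<subseteq> toyG N"
    using A h by (intro tspan_subset_toyG) blast
  with mul.hyps have "tmul x y \<in> toyG N"
    by (blast intro: tmul_toyG)
  then have "tmul x y = tmul (tmul h x) (tmul h y)"
    by (simp add: tmul_ac tmul_cancel_left[OF h])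
  moreover have "tmul h (tmul x y) = tmul (tmul h x) y" "tmul h (tmul x y) = tmul x (tmul h y)"
    by (simp_all add: tmul_ac)
  ultimately show ?case
    using mul.IH by (metis tspan.mul)
qed

lemma tspan_insert:
  assumes A: "A \<subseteq> toyG N" and h: "h \<in> toyG N"
  shows "tspan N (insert h A) = tspan N A \<union> tmul h ` tspan N A"
proof
  let ?S = "tspan N A"
  have h_span: "h \<in> tspan N (insert h A)"
    by (rule tspan.gen) simp
  have S_sub: "?S \<subseteq> tspan N (insert h A)"
    by (rule tspan_mono) auto
  moreover have "tmul h x \<in> tspan N (insert h A)" if "x \<in> ?S" for x
    using h_span S_sub that by (blast intro: tspan.mul)
  ultimately show "?S \<union> tmul h ` ?S \<subseteq> tspan N (insert h A)"
    by blast
  have "tspan N (insert h A) \<subseteq> toyG N"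
    using A h by (intro tspan_subset_toyG) blast
  then show "tspan N (insert h A) \<subseteq> ?S \<union> tmul h ` ?S"
    using tspan_insert_cases[OF A h] tmul_image_iff[OF tspan_subset_toyG[OF A] h] by blast
qed

lemma card_tspan_le:
  "set gs \<subseteq> toyG N \<Longrightarrow>
    finite (tspan N (set gs)) \<and> card (tspan N (set gs)) \<le> 2 ^ length gs"
proof (induction gs)
  case Nil
  then show ?case by (simp add: tspan_empty)
next
  case (Cons g gs)
  let ?S = "tspan N (set gs)"
  have fin: "finite ?S" and card: "card ?S \<le> 2 ^ length gs"
    using Cons by auto
  have span_eq: "tspan N (set (g # gs)) = ?S \<union> tmul g ` ?S"
    using Cons.prems by (simp add: tspan_insert)
  have "card (?S \<union> tmul g ` ?S) \<le> card ?S + card (tmul g ` ?S)"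
    by (rule card_Un_le)
  also have "\<dots> \<le> 2 * card ?S"
    using card_image_le[OF fin] by simp
  finally show ?case
    using fin card span_eq by simp
qed

lemma card_less_Suc_conj:
  "card {k::nat. k < Suc n \<and> P k} = card {k. k < n \<and> P k} + (if P n then 1 else 0)"
proof -
  have "{k. k < Suc n \<and> P k} = (if P n then insert n {k. k < n \<and> P k} else {k. k < n \<and> P k})"
    by (auto simp: less_Suc_eq)
  then show ?thesis by simp
qed

lemma even_card_neq_iff:
  "even (card {k. k < (n::nat) \<and> (P k \<noteq> Q k)}) \<longleftrightarrow>
   (even (card {k. k < n \<and> P k}) \<longleftrightarrow> even (card {k. k < n \<and> Q k}))"
  by (induction n) (auto simp: card_less_Suc_conj)

lemma tcomm_tmul_left:
  assumes "g \<in> toyG N" "h \<in> toyG N" "u \<in> toyG N"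
  shows "tcomm (tmul g h) u \<longleftrightarrow> (tcomm g u \<longleftrightarrow> tcomm h u)"
proof -
  have "{k. k < length (snd (tmul g h)) \<and> panti (snd (tmul g h) ! k) (snd u ! k)} =
        {k. k < N \<and> (panti (snd g ! k) (snd u ! k) \<noteq> panti (snd h ! k) (snd u ! k))}"
    using assms by (auto simp: tmul_def toyG_iff panti_pmul_left)
  then show ?thesis
    using assms even_card_neq_iff[of N "\<lambda>k. panti (snd g ! k) (snd u ! k)"]
    unfolding tcomm_def by (simp add: toyG_iff)
qed

lemma tcomm_sym: "length (snd g) = length (snd h) \<Longrightarrow> tcomm g h \<longleftrightarrow> tcomm h g"
  unfolding tcomm_def by (simp add: panti_sym)

lemma tcomm_tmul_right:
  assumes "g \<in> toyG N" "h \<in> toyG N" "u \<in> toyG N"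
  shows "tcomm u (tmul g h) \<longleftrightarrow> (tcomm u g \<longleftrightarrow> tcomm u h)"
  using tcomm_tmul_left[OF assms] tcomm_sym assms tmul_toyG[OF assms(1,2)]
  by (metis toyG_iff)

lemma tcomm_tone: "x \<in> toyG N \<Longrightarrow> tcomm x (tone N)"
  unfolding tcomm_def tone_def toyG_iff by (simp add: panti_def cong: conj_cong)

lemma tcomm_self: "tcomm x x"
  unfolding tcomm_def by (simp add: panti_def)

lemma tcomm_tneg_left: "tcomm (tneg g) h \<longleftrightarrow> tcomm g h"
  by (simp add: tcomm_def tneg_def)

lemma tcomm_tspan:
  assumes x: "x \<in> toyG N" and A: "A \<subseteq> toyG N" and comm: "\<forall>g\<in>A. tcomm x g"
    and y: "y \<in> tspan N A"
  shows "tcomm x y"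
  using y
proof (induction rule: tspan.induct)
  case one
  then show ?case using x by (rule tcomm_tone)
next
  case (gen g)
  then show ?case using comm by auto
next
  case (mul g h)
  then have "g \<in> toyG N" "h \<in> toyG N"
    using tspan_subset_toyG[OF A] by auto
  then show ?case
    using mul.IH tcomm_tmul_right x by simp
qed

lemma tspan_pairwise_tcomm:
  assumes A: "A \<subseteq> toyG N" and comm: "\<forall>g\<in>A. \<forall>h\<in>A. tcomm g h"
    and x: "x \<in> tspan N A" and y: "y \<in> tspan N A"
  shows "tcomm x y"
proof -
  have x_toyG: "x \<in> toyG N"
    using x tspan_subset_toyG[OF A] by blast
  have "tcomm g x" if "g \<in> A" for g
    using tcomm_tspan[OF _ A _ x] that A comm by blast
  then have "tcomm x g" if "g \<in> A" for g
    using that A x_toyG tcomm_sym by (metis subsetD toyG_iff)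
  then show ?thesis
    using tcomm_tspan[OF x_toyG A _ y] by blast
qed

lemma
  shows finite_pauli_lists: "finite {v :: pauli list. length v = n}"
    and card_pauli_lists: "card {v :: pauli list. length v = n} = 4 ^ n"
proof -
  have UNIV_pauli: "(UNIV :: pauli set) = {PI, PX, PY, PZ}"
    using pauli.exhaust by auto
  have "finite (UNIV :: pauli set)" "card (UNIV :: pauli set) = 4"
    by (simp_all add: UNIV_pauli)
  then show "finite {v :: pauli list. length v = n}" "card {v :: pauli list. length v = n} = 4 ^ n"
    using finite_lists_length_eq[of "UNIV :: pauli set" n]
      card_lists_length_eq[of "UNIV :: pauli set" n] by simp_all
qed

lemma map2_pmul_cancel: "length w = length v \<Longrightarrow> map2 pmul w (map2 pmul w v) = v"
  by (auto intro!: nth_equalityI simp flip: pmul_assoc)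

lemma card_commutant_ge:
  assumes gs: "set gs \<subseteq> toyG N"
  defines "K \<equiv> {v. length v = N \<and> (\<forall>g\<in>set gs. tcomm (False, v) g)}"
  shows "4 ^ N \<le> 2 ^ length gs * card K"
proof -
  define U where "U = {v :: pauli list. length v = N}"
  define B where "B = {bs :: bool list. length bs = length gs}"
  define pattern where "pattern v = map (\<lambda>g. tcomm (False, v) g) gs" for v
  define rep where "rep b = (SOME w. w \<in> U \<and> pattern w = b)" for b
  \<comment> \<open>\<psi> is injective into B \<times> K: multiplying v by a fixed string with the same
      commutation pattern lands in the commutant K.\<close>
  define \<psi> where "\<psi> v = (pattern v, map2 pmul (rep (pattern v)) v)" for v
  have rep: "rep (pattern v) \<in> U \<and> pattern (rep (pattern v)) = pattern v" if "v \<in> U" for v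
    unfolding rep_def by (rule someI[of _ v]) (use that in auto)
  have "inj_on \<psi> U"
  proof (rule inj_onI)
    fix v1 v2 assume v: "v1 \<in> U" "v2 \<in> U" "\<psi> v1 = \<psi> v2"
    then have "pattern v1 = pattern v2"
      and eq: "map2 pmul (rep (pattern v1)) v1 = map2 pmul (rep (pattern v1)) v2"
      unfolding \<psi>_def by auto
    have "length (rep (pattern v1)) = N"
      using rep[OF v(1)] unfolding U_def by auto
    then show "v1 = v2"
      using eq v map2_pmul_cancel unfolding U_def by (metis mem_Collect_eq)
  qed
  moreover have "\<psi> v \<in> B \<times> K" if v: "v \<in> U" for v
  proof -
    define w where "w = rep (pattern v)"
    have w: "w \<in> U" "pattern w = pattern v"
      using rep[OF v] unfolding w_def by auto
    have "tcomm (False, map2 pmul w v) g" if g: "g \<in> set gs" for g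
    proof -
      have "(False, map2 pmul w v) = tmul (False, w) (False, v)"
        by (simp add: tmul_def)
      moreover have "tcomm (False, w) g \<longleftrightarrow> tcomm (False, v) g"
        using w(2) g unfolding pattern_def by auto
      ultimately show ?thesis
        using tcomm_tmul_left[of "(False, w)" N "(False, v)" g] g gs v w(1)
        by (auto simp: U_def toyG_iff)
    qed
    then show ?thesis
      using v w unfolding \<psi>_def w_def K_def U_def B_def pattern_def by auto
  qed
  then have "\<psi> ` U \<subseteq> B \<times> K"
    by blast
  moreover have "finite B" "card B = 2 ^ length gs"
    unfolding B_def using card_lists_length_eq[of "UNIV :: bool set"]
      finite_lists_length_eq[of "UNIV :: bool set"] by auto
  moreover have "finite K"
    by (rule finite_subset[OF _ finite_pauli_lists[of N]]) (auto simp: K_def)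
  ultimately have "card U \<le> 2 ^ length gs * card K"
    using card_inj_on_le[of \<psi> U "B \<times> K"] by (simp add: card_cartesian_product)
  then show ?thesis
    unfolding U_def card_pauli_lists .
qed

lemma exists_commuting_outside_tspan:
  assumes gs: "set gs \<subseteq> toyG N" and short: "length gs < N"
  obtains h where "h \<in> toyG N" "\<forall>g\<in>set gs. tcomm h g"
    "h \<notin> tspan N (set gs)" "tneg h \<notin> tspan N (set gs)"
proof -
  let ?S = "tspan N (set gs)"
  define K where "K = {v. length v = N \<and> (\<forall>g\<in>set gs. tcomm (False, v) g)}"
  have "card K > 2 ^ length gs"
  proof (rule ccontr)
    assume "\<not> ?thesis"
    then have "(4::nat) ^ N \<le> 2 ^ length gs * 2 ^ length gs"
      using card_commutant_ge[OF gs] unfolding K_def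
      by (meson le_trans mult_le_mono2 not_less)
    also have "\<dots> = 4 ^ length gs"
      by (simp flip: power_mult_distrib)
    finally show False
      using short by (simp add: power_le_imp_le_exp leD)
  qed
  moreover have "finite ?S" "card (snd ` ?S) \<le> 2 ^ length gs"
    using card_tspan_le[OF gs] card_image_le[of ?S snd] by auto
  ultimately have "\<not> K \<subseteq> snd ` ?S"
    by (metis card_mono finite_imageI leD le_trans)
  then obtain v where v: "v \<in> K" "v \<notin> snd ` ?S"
    by blast
  show ?thesis
  proof
    show "(False, v) \<in> toyG N" "\<forall>g\<in>set gs. tcomm (False, v) g"
      using v(1) unfolding K_def by (auto simp: toyG_iff)
    show "(False, v) \<notin> ?S" "tneg (False, v) \<notin> ?S"
      using v(2) by (force simp: tneg_def)+
  qed
qed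

lemma toy_stab_tspan_insert:
  assumes A: "A \<subseteq> toyG N" and stab: "toy_stab N (tspan N A)" and h: "h \<in> toyG N"
    and comm: "\<forall>g\<in>A. tcomm h g" and neg: "tneg h \<notin> tspan N A"
  shows "toy_stab N (tspan N (insert h A))"
proof -
  let ?S = "tspan N A"
  have "toy_subgroup N (tspan N (insert h A))"
    unfolding toy_subgroup_def using tspan_subset_toyG[of "insert h A" N] A h
    by (auto intro: tspan.intros)
  moreover have "tcomm x y" if "x \<in> tspan N (insert h A)" "y \<in> tspan N (insert h A)" for x y
  proof (rule tspan_pairwise_tcomm[OF _ _ that])
    have "tcomm g g'" if "g \<in> A" "g' \<in> A" for g g'
      using stab that tspan.gen unfolding toy_stab_def by blast
    moreover have "tcomm g h" if "g \<in> A" for g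
      using comm that A h tcomm_sym by (metis subsetD toyG_iff)
    ultimately show "\<forall>g\<in>insert h A. \<forall>g'\<in>insert h A. tcomm g g'"
      using comm tcomm_self by auto
  qed (use A h in auto)
  moreover have "tminus_one N \<notin> tspan N (insert h A)"
  proof
    assume "tminus_one N \<in> tspan N (insert h A)"
    moreover have "tminus_one N \<notin> ?S"
      using stab unfolding toy_stab_def by simp
    ultimately obtain x where x: "x \<in> ?S" "tminus_one N = tmul h x"
      unfolding tspan_insert[OF A h] by blast
    then have "x = tneg h"
      using tspan_subset_toyG[OF A] h tmul_cancel_left tmul_tminus_one by (metis subsetD)
    with x neg show False by simp
  qed
  ultimately show ?thesis
    unfolding toy_stab_def by blast
qed

lemma tindep_Cons:
  assumes gs: "set gs \<subseteq> toyG N" and indep: "tindep N gs" and h: "h \<in> toyG N"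
    and notin: "h \<notin> tspan N (set gs)"
  shows "tindep N (h # gs)"
proof -
  have h_notin_gs: "h \<notin> set gs"
    using notin tspan.gen by blast
  have "gs ! j \<notin> tspan N (insert h (set gs - {gs ! j}))" if j: "j < length gs" for j
  proof
    let ?x = "gs ! j" and ?A = "set gs - {gs ! j}"
    have A: "?A \<subseteq> toyG N"
      using gs by auto
    assume "?x \<in> tspan N (insert h ?A)"
    moreover have "?x \<notin> tspan N ?A"
      using indep j unfolding tindep_def by auto
    ultimately obtain y where y: "y \<in> tspan N ?A" "?x = tmul h y"
      unfolding tspan_insert[OF A h] by blast
    have "h = tmul ?x y"
      using y h tspan_subset_toyG[OF A] by (metis subsetD tmul_assoc tmul_self tmul_tone_right)
    moreover have "?x \<in> tspan N (set gs)" "y \<in> tspan N (set gs)"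
      using j y(1) tspan_mono[of ?A "set gs"] by (auto intro: tspan.gen)
    then have "tmul ?x y \<in> tspan N (set gs)"
      by (rule tspan.mul)
    ultimately show False
      using notin by simp
  qed
  moreover have "set (h # gs) - {(h # gs) ! Suc j} = insert h (set gs - {gs ! j})"
    if "j < length gs" for j
    using that h_notin_gs by auto
  moreover have "set (h # gs) - {h} = set gs"
    using h_notin_gs by auto
  ultimately show ?thesis
    using indep h_notin_gs notin unfolding tindep_def by (auto simp: less_Suc_eq_0_disj)
qed

lemma toy_stab_split:
  assumes gs: "set gs \<subseteq> toyG N" and indep: "tindep N gs"
    and stab: "toy_stab N (tspan N (set gs))" and short: "length gs < N"
  obtains h where "h \<in> toyG N"
    and "\<And>h'. h' \<in> {h, tneg h} \<Longrightarrow>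
           tindep N (h' # gs) \<and> toy_stab N (tspan N (insert h' (set gs)))"
proof -
  obtain h where h: "h \<in> toyG N" "\<forall>g\<in>set gs. tcomm h g"
    and notin: "h \<notin> tspan N (set gs)" "tneg h \<notin> tspan N (set gs)"
    using exists_commuting_outside_tspan[OF gs short] by blast
  show ?thesis
  proof (rule that[OF h(1)])
    fix h' assume "h' \<in> {h, tneg h}"
    then have "h' \<in> toyG N" "\<forall>g\<in>set gs. tcomm h' g" "h' \<notin> tspan N (set gs)"
      "tneg h' \<notin> tspan N (set gs)"
      using h notin tneg_toyG[OF h(1)] by (auto simp: tcomm_tneg_left)
    then show "tindep N (h' # gs) \<and> toy_stab N (tspan N (insert h' (set gs)))"
      using tindep_Cons[OF gs indep] toy_stab_tspan_insert[OF gs stab] by blast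
  qed
qed

lemma tspan_insert_Int_tspan_insert_tneg:
  assumes A: "A \<subseteq> toyG N" and stab: "toy_stab N (tspan N A)" and h: "h \<in> toyG N"
  shows "tspan N (insert h A) \<inter> tspan N (insert (tneg h) A) = tspan N A"
proof -
  let ?S = "tspan N A"
  have "x \<in> ?S" if x: "x \<in> tmul h ` ?S" "x \<in> tmul (tneg h) ` ?S" for x
  proof -
    obtain a b where ab: "a \<in> ?S" "b \<in> ?S" "x = tmul h a" "x = tmul (tneg h) b"
      using x by blast
    have "a \<in> toyG N" "b \<in> toyG N"
      using ab(1,2) tspan_subset_toyG[OF A] by blast+
    then have "a = tmul h x"
      using ab(3) by (simp add: tmul_cancel_left[OF h])
    also have "\<dots> = tneg b"
      using ab(4) \<open>b \<in> toyG N\<close>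
      by (simp add: tmul_tneg_left tmul_tneg_right tmul_cancel_left[OF h])
    finally have "tneg b \<in> ?S"
      using ab(1) by simp
    with ab(2) stab show ?thesis
      using toy_stab_tneg_notin by blast
  qed
  moreover have "?S \<subseteq> tspan N (insert h A)" "?S \<subseteq> tspan N (insert (tneg h) A)"
    by (rule tspan_mono, blast)+
  ultimately show ?thesis
    unfolding tspan_insert[OF A h] tspan_insert[OF A tneg_toyG[OF h]] by blast
qed

lemma rephasing_of_tspan_insert_tneg:
  assumes A: "A \<subseteq> toyG N" and h: "h \<in> toyG N"
  shows "rephasing_of (tspan N (insert h A)) (tspan N (insert (tneg h) A))"
  unfolding rephasing_of_def tspan_insert[OF A h] tspan_insert[OF A tneg_toyG[OF h]]
  by (auto simp: tmul_tneg_left)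

lemma mixes_subset: "mixes N Gs T \<Longrightarrow> G \<in> set Gs \<Longrightarrow> T \<subseteq> G"
  by (induction arbitrary: G rule: mixes.induct) auto

lemma mixes_disjoint_tneg:
  assumes Gs1: "mixes N Gs1 T1" and Gs2: "mixes N Gs2 T2" and stab: "\<forall>G\<in>set Gs1. toy_stab N G"
    and "h \<in> T1" and "tneg h \<in> T2"
  shows "set Gs1 \<inter> set Gs2 = {}"
proof -
  have "G \<notin> set Gs2" if G: "G \<in> set Gs1" for G
  proof
    assume "G \<in> set Gs2"
    then have "tneg h \<in> G"
      using mixes_subset[OF Gs2] \<open>tneg h \<in> T2\<close> by blast
    moreover have "h \<in> G"
      using mixes_subset[OF Gs1 G] \<open>h \<in> T1\<close> by blast
    ultimately show False
      using stab G toy_stab_tneg_notin by blast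
  qed
  then show ?thesis
    by blast
qed

lemma mixes_tspan_insert_tneg:
  assumes A: "A \<subseteq> toyG N" and stab: "toy_stab N (tspan N A)" and h: "h \<in> toyG N"
    and stab1: "toy_stab N (tspan N (insert h A))"
    and stab2: "toy_stab N (tspan N (insert (tneg h) A))"
    and Gs1: "mixes N Gs1 (tspan N (insert h A))"
    and Gs2: "mixes N Gs2 (tspan N (insert (tneg h) A))"
  shows "mixes N (Gs1 @ Gs2) (tspan N A)"
  using mixes.mix[OF Gs1 Gs2 stab1 stab2 rephasing_of_tspan_insert_tneg[OF A h]]
    rephasing_of_tspan_insert_tneg[OF A tneg_toyG[OF h]]
    tspan_insert_Int_tspan_insert_tneg[OF A stab h]
  by simp

theorem mainTheorem4:
  fixes N k :: nat and gs :: "toy list"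
  assumes "k \<le> N"
    and "length gs = N - k"
    and "set gs \<subseteq> toyG N"
    and "tindep N gs"
    and "toy_stab N (tspan N (set gs))"
  shows "\<exists>Gs. length Gs = 2 ^ k \<and> distinct Gs \<and> (\<forall>G\<in>set Gs. toy_pure N G) \<and>
           mixes N Gs (tspan N (set gs))"
  using assms
proof (induction k arbitrary: gs)
  case 0
  then have "toy_pure N (tspan N (set gs))"
    unfolding toy_pure_def by auto
  with 0 show ?case
    by (intro exI[of _ "[tspan N (set gs)]"]) (auto intro: mixes.leaf)
next
  case (Suc k)
  obtain h where h: "h \<in> toyG N" and split: "\<And>h'. h' \<in> {h, tneg h} \<Longrightarrow>
      tindep N (h' # gs) \<and> toy_stab N (tspan N (insert h' (set gs)))"
    using toy_stab_split[OF Suc.prems(3-5)] Suc.prems(1,2) by auto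
  have len: "Suc (length gs) = N - k"
    using Suc.prems(1,2) by simp
  obtain Gs1 where
    Gs1: "length Gs1 = 2 ^ k" "distinct Gs1" "\<forall>G\<in>set Gs1. toy_pure N G"
      "mixes N Gs1 (tspan N (insert h (set gs)))"
    using Suc.IH[of "h # gs"] split[of h] Suc.prems len h by auto
  obtain Gs2 where
    Gs2: "length Gs2 = 2 ^ k" "distinct Gs2" "\<forall>G\<in>set Gs2. toy_pure N G"
      "mixes N Gs2 (tspan N (insert (tneg h) (set gs)))"
    using Suc.IH[of "tneg h # gs"] split[of "tneg h"] Suc.prems len tneg_toyG[OF h] by auto
  have "set Gs1 \<inter> set Gs2 = {}"
    using Gs1(3) by (intro mixes_disjoint_tneg[OF Gs1(4) Gs2(4)])
      (auto simp: toy_pure_def intro: tspan.gen)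
  moreover have "mixes N (Gs1 @ Gs2) (tspan N (set gs))"
    using mixes_tspan_insert_tneg[OF Suc.prems(3,5) h _ _ Gs1(4) Gs2(4)] split by simp
  ultimately show ?case
    using Gs1 Gs2 by (intro exI[of _ "Gs1 @ Gs2"]) auto
qed

end
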